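(* Let $\mathcal{S}\subseteq\mathbb{Q}[x_1,\dots,x_n]$ and let $m\ge1$ be an integer. Set $\mathcal{S}^m=\{P(x_1^m,\dots,x_n^m)\ :\ P\in\mathcal{S}\}$, and for a set $\mathcal{T}$ of polynomials write $\mathcal{T}^m$ likewise. Let $G(I)$ denote the unique reduced monic Gröbner basis of an ideal $I$ with respect to the lexicographic monomial order ($x^\nu>x^\mu$ iff the first non-zero entry of $\nu-\mu$ is positive). Then $$G(\langle\mathcal{S}^m\rangle)=G(\langle\mathcal{S}\rangle)^m,$$ where $\langle\cdot\rangle$ denotes the ideal generated. *)

theory Defs
  imports Complex_Main "HOL-Library.Poly_Mapping"
begin

text \<open>Multivariate polynomials over the rationals in the variables x_0, x_1, ...
  (the paper's x_1,...,x_n are x_0,...,x_(n-1) here).\<close>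

type_synonym monom = "nat \<Rightarrow>\<^sub>0 nat"
type_synonym qpoly = "monom \<Rightarrow>\<^sub>0 rat"

definition polys_in :: "nat \<Rightarrow> qpoly set" where
  "polys_in n = {p. \<forall>\<mu>\<in>Poly_Mapping.keys p. Poly_Mapping.keys \<mu> \<subseteq> {..<n}}"

definition gen_ideal :: "nat \<Rightarrow> qpoly set \<Rightarrow> qpoly set" where
  "gen_ideal n S = {p. \<exists>F c. finite F \<and> F \<subseteq> S \<and> (\<forall>s\<in>F. c s \<in> polys_in n)
                          \<and> p = (\<Sum>s\<in>F. c s * s)}"

definition lex_gt :: "monom \<Rightarrow> monom \<Rightarrow> bool" where
  "lex_gt \<nu> \<mu> \<longleftrightarrow> (\<exists>i. Poly_Mapping.lookup \<mu> i < Poly_Mapping.lookup \<nu> i \<and> (\<forall>j<i. Poly_Mapping.lookup \<nu> j = Poly_Mapping.lookup \<mu> j))"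

definition lm :: "qpoly \<Rightarrow> monom" where
  "lm p = (THE \<mu>. \<mu> \<in> Poly_Mapping.keys p \<and> (\<forall>\<nu>\<in>Poly_Mapping.keys p. \<nu> \<noteq> \<mu> \<longrightarrow> lex_gt \<mu> \<nu>))"

definition lc :: "qpoly \<Rightarrow> rat" where
  "lc p = Poly_Mapping.lookup p (lm p)"

definition mdvd :: "monom \<Rightarrow> monom \<Rightarrow> bool" where
  "mdvd \<mu> \<nu> \<longleftrightarrow> (\<forall>i. Poly_Mapping.lookup \<mu> i \<le> Poly_Mapping.lookup \<nu> i)"

definition is_groebner_basis :: "nat \<Rightarrow> qpoly set \<Rightarrow> qpoly set \<Rightarrow> bool" where
  "is_groebner_basis n I G \<longleftrightarrow> finite G \<and> G \<subseteq> I \<and> G \<subseteq> polys_in n \<and> 0 \<notin> G \<and>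
     (\<forall>p\<in>I. p \<noteq> 0 \<longrightarrow> (\<exists>g\<in>G. mdvd (lm g) (lm p)))"

definition is_reduced_gb :: "nat \<Rightarrow> qpoly set \<Rightarrow> qpoly set \<Rightarrow> bool" where
  "is_reduced_gb n I G \<longleftrightarrow> is_groebner_basis n I G \<and>
     (\<forall>g\<in>G. lc g = 1 \<and> (\<forall>\<mu>\<in>Poly_Mapping.keys g. \<forall>g'\<in>G - {g}. \<not> mdvd (lm g') \<mu>))"

definition reduced_gb :: "nat \<Rightarrow> qpoly set \<Rightarrow> qpoly set" where
  "reduced_gb n I = (THE G. is_reduced_gb n I G)"

definition pow_subst :: "nat \<Rightarrow> qpoly \<Rightarrow> qpoly" where
  "pow_subst m p = (\<Sum>\<mu>\<in>Poly_Mapping.keys p. Poly_Mapping.single (Poly_Mapping.map (\<lambda>k. m * k) \<mu>) (Poly_Mapping.lookup p \<mu>))"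

end

theory Submission
  imports Defs
begin

text \<open>
  Multiplying all exponents by \<open>m\<close> is a ring homomorphism \<open>pow_subst m\<close> that
  preserves the lexicographic order and divisibility of monomials. Hence it maps a reduced
  Groebner basis \<open>G\<close> of \<open>\<langle>S\<rangle>\<close> to a set of monic polynomials in \<open>\<langle>S\<^sup>m\<rangle>\<close> whose
  non-leading terms are not divisible by other leading monomials. For the Groebner property,
  write the leading monomial of \<open>p \<in> \<langle>S\<^sup>m\<rangle>\<close> as \<open>x\<^sup>r\<^sup>+\<^sup>m\<^sup>\<mu>\<close> with \<open>0 \<le> r\<^sub>i < m\<close>. Extracting from \<open>p\<close> the
  terms with exponents \<open>\<equiv> r (mod m)\<close> and dividing those exponents by \<open>m\<close> commutes with
  multiplication by \<open>pow_subst m s\<close>, so it sends \<open>\<langle>S\<^sup>m\<rangle>\<close> into \<open>\<langle>S\<rangle>\<close>; the result has leading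
  monomial \<open>x\<^sup>\<mu>\<close>, which is divisible by some \<open>lm g\<close>, and then \<open>lm (pow_subst m g)\<close> divides
  \<open>lm p\<close>. Existence (by Dickson's lemma and reduction of tails) and uniqueness of reduced
  Groebner bases turn this into an equality of \<open>reduced_gb\<close>.
\<close>

lemma lex_gt_iff_less: "lex_gt \<nu> \<mu> \<longleftrightarrow> \<mu> < \<nu>"
  by (auto simp: lex_gt_def less_poly_mapping.rep_eq less_fun_def)

lemma lm_eq_Max:
  assumes "p \<noteq> 0"
  shows "lm p = Max (Poly_Mapping.keys p)"
  unfolding lm_def lex_gt_iff_less
proof (rule the_equality)
  show "Max (Poly_Mapping.keys p) \<in> Poly_Mapping.keys p \<and>
      (\<forall>\<nu>\<in>Poly_Mapping.keys p. \<nu> \<noteq> Max (Poly_Mapping.keys p) \<longrightarrow> \<nu> < Max (Poly_Mapping.keys p))"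
    using assms by (auto simp: order.not_eq_order_implies_strict)
next
  fix \<mu> assume "\<mu> \<in> Poly_Mapping.keys p \<and> (\<forall>\<nu>\<in>Poly_Mapping.keys p. \<nu> \<noteq> \<mu> \<longrightarrow> \<nu> < \<mu>)"
  then show "\<mu> = Max (Poly_Mapping.keys p)"
    by (intro Max_eqI[symmetric]) (auto intro: less_imp_le)
qed

lemma lm_in_keys: "p \<noteq> 0 \<Longrightarrow> lm p \<in> Poly_Mapping.keys p"
  by (simp add: lm_eq_Max)

lemma le_lm: "\<mu> \<in> Poly_Mapping.keys p \<Longrightarrow> \<mu> \<le> lm p"
  by (metis Max_ge empty_iff finite_keys keys_zero lm_eq_Max)

lemma lm_eqI: "\<mu> \<in> Poly_Mapping.keys p \<Longrightarrow> (\<And>\<nu>. \<nu> \<in> Poly_Mapping.keys p \<Longrightarrow> \<nu> \<le> \<mu>) \<Longrightarrow> lm p = \<mu>"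
  by (metis Max_eqI empty_iff finite_keys keys_zero lm_eq_Max)

lemma lm_cong_keys: "Poly_Mapping.keys p = Poly_Mapping.keys q \<Longrightarrow> lm p = lm q"
  by (simp add: lm_def)

lemma lc_nonzero: "p \<noteq> 0 \<Longrightarrow> lc p \<noteq> 0"
  by (simp add: lc_def lm_in_keys flip: in_keys_iff)

lemma mdvd_refl: "mdvd \<mu> \<mu>"
  by (simp add: mdvd_def)

lemma mdvd_trans: "mdvd \<kappa> \<mu> \<Longrightarrow> mdvd \<mu> \<nu> \<Longrightarrow> mdvd \<kappa> \<nu>"
  unfolding mdvd_def using order_trans by blast

lemma mdvd_imp_le: "mdvd \<mu> \<nu> \<Longrightarrow> \<mu> \<le> \<nu>"
  by (auto simp: mdvd_def less_poly_mapping.rep_eq less_fun_def not_less[symmetric])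

lemma mdvd_antisym: "mdvd \<mu> \<nu> \<Longrightarrow> mdvd \<nu> \<mu> \<Longrightarrow> \<mu> = \<nu>"
  using mdvd_imp_le by (blast intro: order.antisym)

lemma mdvd_diff_add: "mdvd \<kappa> \<mu> \<Longrightarrow> (\<mu> - \<kappa>) + \<kappa> = \<mu>"
  by (rule poly_mapping_eqI) (simp add: mdvd_def lookup_add lookup_minus)

definition monoms_in :: "nat \<Rightarrow> monom set" where
  "monoms_in n = {\<mu>. Poly_Mapping.keys \<mu> \<subseteq> {..<n}}"

lemma polys_in_iff_keys: "p \<in> polys_in n \<longleftrightarrow> Poly_Mapping.keys p \<subseteq> monoms_in n"
  by (auto simp: polys_in_def monoms_in_def)

lemma keys_subset_monoms_in: "p \<in> polys_in n \<Longrightarrow> \<mu> \<in> Poly_Mapping.keys p \<Longrightarrow> \<mu> \<in> monoms_in n"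
  by (auto simp: polys_in_iff_keys)

lemma monoms_in_zero [simp]: "0 \<in> monoms_in n"
  by (simp add: monoms_in_def)

lemma polys_in_zero [simp]: "0 \<in> polys_in n"
  by (simp add: polys_in_iff_keys)

lemma polys_in_add: "p \<in> polys_in n \<Longrightarrow> q \<in> polys_in n \<Longrightarrow> p + q \<in> polys_in n"
  using keys_add[of p q] by (auto simp: polys_in_iff_keys)

lemma polys_in_single: "\<mu> \<in> monoms_in n \<Longrightarrow> Poly_Mapping.single \<mu> c \<in> polys_in n"
  by (simp add: polys_in_iff_keys)

lemma monoms_in_add: "\<mu> \<in> monoms_in n \<Longrightarrow> \<nu> \<in> monoms_in n \<Longrightarrow> \<mu> + \<nu> \<in> monoms_in n"
  using keys_add[of \<mu> \<nu>] by (auto simp: monoms_in_def)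

lemma monoms_in_diff: "\<mu> \<in> monoms_in n \<Longrightarrow> \<mu> - \<nu> \<in> monoms_in n"
  by (auto simp: monoms_in_def in_keys_iff lookup_minus subset_eq)

lemma polys_in_mult: "p \<in> polys_in n \<Longrightarrow> q \<in> polys_in n \<Longrightarrow> p * q \<in> polys_in n"
  using keys_mult[of p q] monoms_in_add by (fastforce simp: polys_in_iff_keys)

lemma polys_in_sum: "(\<And>x. x \<in> A \<Longrightarrow> f x \<in> polys_in n) \<Longrightarrow> sum f A \<in> polys_in n"
  by (induction A rule: infinite_finite_induct) (simp_all add: polys_in_add)

section \<open>Dickson's lemma\<close>

lemma ex_mono_subseq_nat:
  fixes a :: "nat \<Rightarrow> nat"
  obtains h :: "nat \<Rightarrow> nat" where "strict_mono h" "mono (a \<circ> h)"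
proof -
  obtain f where f: "strict_mono f" "monoseq (a \<circ> f)"
    using seq_monosub by (auto simp: o_def)
  show thesis
  proof (cases "mono (a \<circ> f)")
    case True
    with f(1) show thesis by (rule that)
  next
    case False
    \<comment> \<open>A non-increasing sequence of naturals is constant from the point where it attains its minimum.\<close>
    then have dec: "a (f j) \<le> a (f i)" if "i \<le> j" for i j
      using f(2) that by (auto simp: monoseq_def mono_def)
    obtain N where N: "\<And>k. a (f N) \<le> a (f k)"
      using ex_has_least_nat[of "\<lambda>_. True" 0 "a \<circ> f"] by auto
    have "strict_mono (\<lambda>i. f (i + N))"
      using f(1) by (simp add: strict_mono_def)
    moreover have "a (f (i + N)) = a (f N)" for i
      using dec[of N "i + N"] N[of "i + N"] by simp
    then have "mono (a \<circ> (\<lambda>i. f (i + N)))"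
      by (simp add: mono_def)
    ultimately show thesis by (rule that)
  qed
qed

lemma ex_subseq_mono_lookups:
  fixes f :: "nat \<Rightarrow> monom"
  shows "\<exists>h :: nat \<Rightarrow> nat. strict_mono h \<and> (\<forall>k<n. mono (\<lambda>i. Poly_Mapping.lookup (f (h i)) k))"
proof (induction n)
  case 0
  show ?case by (rule exI[of _ id]) (simp add: strict_mono_def)
next
  case (Suc n)
  then obtain h :: "nat \<Rightarrow> nat" where h: "strict_mono h" "\<forall>k<n. mono (\<lambda>i. Poly_Mapping.lookup (f (h i)) k)"
    by blast
  obtain h' :: "nat \<Rightarrow> nat" where h': "strict_mono h'" "mono ((\<lambda>i. Poly_Mapping.lookup (f (h i)) n) \<circ> h')"
    by (rule ex_mono_subseq_nat)
  have "mono (\<lambda>i. Poly_Mapping.lookup (f (h (h' i))) k)" if "k < Suc n" for k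
  proof (cases "k = n")
    case True
    then show ?thesis using h'(2) by (simp add: o_def)
  next
    case False
    then have "mono (\<lambda>i. Poly_Mapping.lookup (f (h i)) k)"
      using h(2) that by simp
    with strict_mono_mono[OF h'(1)] show ?thesis
      unfolding mono_def by blast
  qed
  moreover have "strict_mono (h \<circ> h')"
    using h(1) h'(1) by (simp add: strict_mono_def)
  ultimately show ?case by (intro exI[of _ "h \<circ> h'"]) (simp add: o_def)
qed

theorem dickson:
  fixes f :: "nat \<Rightarrow> monom"
  assumes "range f \<subseteq> monoms_in n"
  shows "\<exists>i j. i < j \<and> mdvd (f i) (f j)"
proof -
  obtain h :: "nat \<Rightarrow> nat" where h: "strict_mono h" "\<And>k. k < n \<Longrightarrow> mono (\<lambda>i. Poly_Mapping.lookup (f (h i)) k)"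
    using ex_subseq_mono_lookups[of n f] by blast
  have "mdvd (f (h 0)) (f (h 1))"
    unfolding mdvd_def
  proof
    fix k show "Poly_Mapping.lookup (f (h 0)) k \<le> Poly_Mapping.lookup (f (h 1)) k"
    proof (cases "k < n")
      case True
      then show ?thesis using h(2) monoD by blast
    next
      case False
      then have "k \<notin> Poly_Mapping.keys (f (h 0))"
        using assms by (auto simp: monoms_in_def)
      then show ?thesis by (simp add: in_keys_iff)
    qed
  qed
  moreover have "h 0 < h 1"
    using h(1) by (simp add: strict_mono_def)
  ultimately show ?thesis by blast
qed

definition less_in :: "nat \<Rightarrow> monom rel" where
  "less_in n = {(\<mu>, \<nu>). \<mu> \<in> monoms_in n \<and> \<nu> \<in> monoms_in n \<and> \<mu> < \<nu>}"

lemma wf_less_in: "wf (less_in n)"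
  unfolding wf_iff_no_infinite_down_chain
proof
  assume "\<exists>f. \<forall>i. (f (Suc i), f i) \<in> less_in n"
  then obtain f where f: "\<And>i. (f (Suc i), f i) \<in> less_in n" by blast
  then have "range f \<subseteq> monoms_in n" "\<And>i. f (Suc i) < f i"
    by (auto simp: less_in_def)
  then obtain i j where "i < j" "mdvd (f i) (f j)"
    using dickson[of f n] by blast
  moreover have "f j < f i" if "i < j" for i j
    using that
  proof (induction j)
    case (Suc j)
    then show ?case
      using \<open>\<And>i. f (Suc i) < f i\<close> by (metis less_Suc_eq order.strict_trans)
  qed simp
  ultimately show False
    using mdvd_imp_le leD by blast
qed

definition mdvd_minimal :: "monom set \<Rightarrow> monom set" where
  "mdvd_minimal L = {\<mu> \<in> L. \<forall>\<nu>\<in>L. mdvd \<nu> \<mu> \<longrightarrow> \<nu> = \<mu>}"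

lemma finite_mdvd_minimal:
  assumes "L \<subseteq> monoms_in n"
  shows "finite (mdvd_minimal L)"
proof (rule ccontr)
  assume "infinite (mdvd_minimal L)"
  then obtain f :: "nat \<Rightarrow> monom" where f: "inj f" "range f \<subseteq> mdvd_minimal L"
    using infinite_iff_countable_subset by metis
  moreover have "mdvd_minimal L \<subseteq> monoms_in n"
    using assms by (auto simp: mdvd_minimal_def)
  ultimately obtain i j where ij: "i < j" "mdvd (f i) (f j)"
    using dickson[of f n] by blast
  have "f j \<in> mdvd_minimal L" "f i \<in> L"
    using f(2) by (auto simp: mdvd_minimal_def)
  then have "f i = f j"
    using ij(2) by (simp add: mdvd_minimal_def)
  with f(1) ij(1) show False
    by (simp add: inj_eq)
qed

lemma ex_mdvd_minimal_mdvd: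
  assumes "L \<subseteq> monoms_in n" and "\<mu> \<in> L"
  shows "\<exists>\<kappa>\<in>mdvd_minimal L. mdvd \<kappa> \<mu>"
proof -
  \<comment> \<open>A lex-least divisor of \<open>\<mu>\<close> in \<open>L\<close> is divisibility-minimal in \<open>L\<close>.\<close>
  obtain \<kappa> where \<kappa>: "\<kappa> \<in> L" "mdvd \<kappa> \<mu>"
    and least: "\<And>\<nu>. (\<nu>, \<kappa>) \<in> less_in n \<Longrightarrow> \<nu> \<notin> {\<nu> \<in> L. mdvd \<nu> \<mu>}"
    using wfE_min[OF wf_less_in, of \<mu> "{\<nu> \<in> L. mdvd \<nu> \<mu>}"] assms(2) mdvd_refl
    by (metis (no_types, lifting) mem_Collect_eq)
  have "\<nu> = \<kappa>" if "\<nu> \<in> L" "mdvd \<nu> \<kappa>" for \<nu>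
  proof (rule ccontr)
    assume "\<nu> \<noteq> \<kappa>"
    with \<open>mdvd \<nu> \<kappa>\<close> have "\<nu> < \<kappa>"
      using mdvd_imp_le by (simp add: order.strict_iff_order)
    with \<open>\<nu> \<in> L\<close> \<open>\<kappa> \<in> L\<close> assms(1) have "(\<nu>, \<kappa>) \<in> less_in n"
      by (auto simp: less_in_def)
    with least that \<kappa>(2) mdvd_trans show False by blast
  qed
  with \<kappa> show ?thesis by (auto simp: mdvd_minimal_def)
qed

lemma gen_idealI:
  "finite F \<Longrightarrow> F \<subseteq> S \<Longrightarrow> (\<And>s. s \<in> F \<Longrightarrow> c s \<in> polys_in n) \<Longrightarrow> (\<Sum>s\<in>F. c s * s) \<in> gen_ideal n S"
  unfolding gen_ideal_def by blast

lemma gen_idealE: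
  assumes "p \<in> gen_ideal n S"
  obtains F c where "finite F" "F \<subseteq> S" "\<And>s. s \<in> F \<Longrightarrow> c s \<in> polys_in n" "p = (\<Sum>s\<in>F. c s * s)"
proof -
  from assms obtain F c where "finite F" "F \<subseteq> S" "\<forall>s\<in>F. c s \<in> polys_in n" "p = (\<Sum>s\<in>F. c s * s)"
    unfolding gen_ideal_def by blast
  then show thesis by (intro that) auto
qed

lemma gen_ideal_zero [simp]: "0 \<in> gen_ideal n S"
  using gen_idealI[of "{}" S] by simp

lemma gen_ideal_subset_polys_in: "S \<subseteq> polys_in n \<Longrightarrow> gen_ideal n S \<subseteq> polys_in n"
  by (auto elim!: gen_idealE intro!: polys_in_sum polys_in_mult)

lemma generator_in_gen_ideal: "s \<in> S \<Longrightarrow> s \<in> gen_ideal n S"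
  using gen_idealI[of "{s}" S "\<lambda>_. 1" n] by (simp add: polys_in_iff_keys)

lemma gen_ideal_add:
  assumes "p \<in> gen_ideal n S" "q \<in> gen_ideal n S"
  shows "p + q \<in> gen_ideal n S"
proof -
  obtain F c where F: "finite F" "F \<subseteq> S" "\<And>s. s \<in> F \<Longrightarrow> c s \<in> polys_in n" "p = (\<Sum>s\<in>F. c s * s)"
    using assms(1) by (rule gen_idealE) auto
  obtain F' d where F': "finite F'" "F' \<subseteq> S" "\<And>s. s \<in> F' \<Longrightarrow> d s \<in> polys_in n" "q = (\<Sum>s\<in>F'. d s * s)"
    using assms(2) by (rule gen_idealE) auto
  define e where "e s = (if s \<in> F then c s else 0) + (if s \<in> F' then d s else 0)" for s
  have "(\<Sum>s\<in>F \<union> F'. (if s \<in> F then c s else 0) * s) = p"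
    "(\<Sum>s\<in>F \<union> F'. (if s \<in> F' then d s else 0) * s) = q"
    unfolding F(4) F'(4) using F(1) F'(1) by (auto intro: sum.mono_neutral_cong_right)
  then have "p + q = (\<Sum>s\<in>F \<union> F'. e s * s)"
    by (simp add: e_def distrib_right sum.distrib)
  moreover have "e s \<in> polys_in n" for s
    using F(3) F'(3) by (simp add: e_def polys_in_add)
  ultimately show ?thesis
    using F(1,2) F'(1,2) by (simp add: gen_idealI)
qed

lemma gen_ideal_mult:
  assumes "p \<in> gen_ideal n S" "r \<in> polys_in n"
  shows "r * p \<in> gen_ideal n S"
proof -
  obtain F c where F: "finite F" "F \<subseteq> S" "\<And>s. s \<in> F \<Longrightarrow> c s \<in> polys_in n" "p = (\<Sum>s\<in>F. c s * s)"
    using assms(1) by (rule gen_idealE) auto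
  then have "r * p = (\<Sum>s\<in>F. (r * c s) * s)"
    by (simp add: sum_distrib_left mult.assoc)
  with F(1-3) assms(2) show ?thesis
    by (simp add: gen_idealI polys_in_mult)
qed

lemma gen_ideal_diff:
  assumes "p \<in> gen_ideal n S" "q \<in> gen_ideal n S"
  shows "p - q \<in> gen_ideal n S"
proof -
  have "- 1 * q \<in> gen_ideal n S"
    using assms(2) by (rule gen_ideal_mult) (simp add: polys_in_iff_keys)
  with assms(1) show ?thesis
    using gen_ideal_add[of p n S "- q"] by simp
qed

lemma gen_ideal_sum:
  "finite A \<Longrightarrow> (\<And>x. x \<in> A \<Longrightarrow> f x \<in> gen_ideal n S) \<Longrightarrow> sum f A \<in> gen_ideal n S"
  by (induction A rule: finite_induct) (simp_all add: gen_ideal_add)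

lemma lookup_single_mult_add:
  fixes g :: "'a::cancel_comm_monoid_add \<Rightarrow>\<^sub>0 'b::semiring_0"
  shows "Poly_Mapping.lookup (Poly_Mapping.single \<alpha> c * g) (\<alpha> + \<nu>) = c * Poly_Mapping.lookup g \<nu>"
  by (simp add: lookup_mult lookup_single when_mult mult_when)

lemma keys_single_mult: "Poly_Mapping.keys (Poly_Mapping.single \<alpha> c * g) \<subseteq> (+) \<alpha> ` Poly_Mapping.keys g"
  using keys_mult[of "Poly_Mapping.single \<alpha> c" g] by (auto split: if_splits)

lemma keys_single_mult_le:
  fixes g :: qpoly
  assumes "g \<noteq> 0" "mdvd (lm g) \<beta>" "\<mu> \<in> Poly_Mapping.keys (Poly_Mapping.single (\<beta> - lm g) c * g)"
  shows "\<mu> \<le> \<beta>"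
proof -
  obtain \<nu> where "\<nu> \<in> Poly_Mapping.keys g" "\<mu> = (\<beta> - lm g) + \<nu>"
    using assms(3) keys_single_mult by blast
  then have "\<mu> \<le> (\<beta> - lm g) + lm g"
    by (simp add: le_lm add_left_mono)
  then show ?thesis
    using assms(2) by (simp add: mdvd_diff_add)
qed

lemma reduce_term:
  fixes q g :: qpoly
  assumes "g \<noteq> 0" "lc g = 1" "mdvd (lm g) \<beta>"
  defines "q' \<equiv> q - Poly_Mapping.single (\<beta> - lm g) (Poly_Mapping.lookup q \<beta>) * g"
  shows "Poly_Mapping.lookup q' \<beta> = 0"
    and "\<And>\<mu>. \<beta> < \<mu> \<Longrightarrow> Poly_Mapping.lookup q' \<mu> = Poly_Mapping.lookup q \<mu>"
    and "\<And>\<mu>. \<mu> \<in> Poly_Mapping.keys q' \<Longrightarrow> \<mu> \<in> Poly_Mapping.keys q \<or> \<mu> < \<beta>"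
proof -
  define h where "h = Poly_Mapping.single (\<beta> - lm g) (Poly_Mapping.lookup q \<beta>) * g"
  have "Poly_Mapping.lookup h \<beta> = Poly_Mapping.lookup q \<beta>"
    using lookup_single_mult_add[of "\<beta> - lm g" _ g "lm g"] assms(2,3)
    by (simp add: h_def mdvd_diff_add lc_def)
  then show "Poly_Mapping.lookup q' \<beta> = 0"
    by (simp add: q'_def h_def lookup_minus)
  have h_le: "\<mu> \<le> \<beta>" if "\<mu> \<in> Poly_Mapping.keys h" for \<mu>
    using keys_single_mult_le[OF assms(1,3)] that by (simp add: h_def)
  have q'_h: "q' = q - h"
    by (simp add: q'_def h_def)
  show "Poly_Mapping.lookup q' \<mu> = Poly_Mapping.lookup q \<mu>" if "\<beta> < \<mu>" for \<mu>
  proof -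
    have "\<mu> \<notin> Poly_Mapping.keys h"
      using h_le that leD by blast
    then show ?thesis
      by (simp add: q'_h lookup_minus in_keys_iff)
  qed
  show "\<mu> \<in> Poly_Mapping.keys q \<or> \<mu> < \<beta>" if \<mu>: "\<mu> \<in> Poly_Mapping.keys q'" for \<mu>
  proof -
    have "\<mu> \<noteq> \<beta>"
      using \<mu> \<open>Poly_Mapping.lookup q' \<beta> = 0\<close> by (auto simp: in_keys_iff)
    moreover have "\<mu> \<in> Poly_Mapping.keys q \<or> \<mu> \<in> Poly_Mapping.keys h"
      using \<mu> keys_diff[of q h] by (auto simp: q'_h)
    ultimately show ?thesis
      using h_le by (auto simp: order.order_iff_strict)
  qed
qed

section \<open>Existence and uniqueness of reduced Groebner bases\<close>

definition lead_monoms :: "qpoly set \<Rightarrow> monom set" where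
  "lead_monoms I = {lm p | p. p \<in> I \<and> p \<noteq> 0}"

definition reducible_terms :: "qpoly set \<Rightarrow> qpoly \<Rightarrow> monom set" where
  "reducible_terms I q = {\<nu> \<in> Poly_Mapping.keys q. \<nu> \<noteq> lm q \<and> (\<exists>\<kappa>\<in>lead_monoms I. mdvd \<kappa> \<nu>)}"

lemma reducible_terms_subset: "reducible_terms I q \<subseteq> Poly_Mapping.keys q"
  by (auto simp: reducible_terms_def)

lemma finite_reducible_terms: "finite (reducible_terms I q)"
  using finite_subset[OF reducible_terms_subset] by simp

lemma lead_monoms_subset:
  "S \<subseteq> polys_in n \<Longrightarrow> lead_monoms (gen_ideal n S) \<subseteq> monoms_in n"
proof
  fix \<mu> assume "S \<subseteq> polys_in n" "\<mu> \<in> lead_monoms (gen_ideal n S)"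
  then obtain p where "p \<in> polys_in n" "p \<noteq> 0" "\<mu> = lm p"
    using gen_ideal_subset_polys_in[of S n] by (auto simp: lead_monoms_def)
  then show "\<mu> \<in> monoms_in n"
    using lm_in_keys by (auto simp: polys_in_iff_keys)
qed

lemma ex_monic_with_lm:
  assumes "p \<in> gen_ideal n S" "p \<noteq> 0"
  shows "\<exists>q\<in>gen_ideal n S. q \<noteq> 0 \<and> lm q = lm p \<and> lc q = 1"
proof -
  define q where "q = Poly_Mapping.single 0 (1 / lc p) * p"
  have keys: "Poly_Mapping.keys q = Poly_Mapping.keys p"
    using lc_nonzero[OF assms(2)]
    by (auto simp: q_def in_keys_iff lookup_single_mult_add[of 0, simplified])
  then have lm: "lm q = lm p"
    by (rule lm_cong_keys)
  have "q \<in> gen_ideal n S"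
    unfolding q_def using assms(1) by (rule gen_ideal_mult) (simp add: polys_in_single)
  moreover have "lc q = 1"
    using lc_nonzero[OF assms(2)] unfolding lc_def lm
    by (simp add: q_def lookup_single_mult_add[of 0, simplified] lc_def)
  ultimately show ?thesis
    using keys lm assms(2) by (metis keys_eq_empty)
qed

lemma tail_not_mdvd_minimal_lead_monom:
  assumes "lm h \<in> mdvd_minimal (lead_monoms I)" "lm h' \<in> mdvd_minimal (lead_monoms I)"
    and "lm h' \<noteq> lm h" "reducible_terms I h = {}" "\<nu> \<in> Poly_Mapping.keys h"
  shows "\<not> mdvd (lm h') \<nu>"
proof
  assume dvd: "mdvd (lm h') \<nu>"
  show False
  proof (cases "\<nu> = lm h")
    case True
    with assms(1-3) dvd show False
      by (auto simp: mdvd_minimal_def)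
  next
    case False
    with assms(2,5) dvd have "\<nu> \<in> reducible_terms I h"
      by (auto simp: reducible_terms_def mdvd_minimal_def)
    with assms(4) show False by simp
  qed
qed

context
  fixes n :: nat and S :: "qpoly set"
  assumes S: "S \<subseteq> polys_in n"
begin

lemma reduce_max_reducible_term:
  assumes q: "q \<in> gen_ideal n S" "q \<noteq> 0" "lc q = 1"
    and red: "reducible_terms (gen_ideal n S) q \<noteq> {}"
  obtains q' where "q' \<in> gen_ideal n S" "q' \<noteq> 0" "lm q' = lm q" "lc q' = 1"
    "\<And>\<nu>. \<nu> \<in> reducible_terms (gen_ideal n S) q' \<Longrightarrow> \<nu> < Max (reducible_terms (gen_ideal n S) q)"
proof -
  let ?I = "gen_ideal n S" and ?R = "reducible_terms (gen_ideal n S)"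
  define \<beta> where "\<beta> = Max (?R q)"
  have "\<beta> \<in> ?R q"
    using red finite_reducible_terms by (simp add: \<beta>_def)
  then obtain \<kappa> where \<beta>: "\<beta> \<in> Poly_Mapping.keys q" "\<beta> < lm q" "\<kappa> \<in> lead_monoms ?I" "mdvd \<kappa> \<beta>"
    using le_lm by (auto simp: reducible_terms_def order.strict_iff_order)
  obtain g where g: "g \<in> ?I" "g \<noteq> 0" "lm g = \<kappa>" "lc g = 1"
    using \<beta>(3) ex_monic_with_lm by (force simp: lead_monoms_def)
  define q' where "q' = q - Poly_Mapping.single (\<beta> - lm g) (Poly_Mapping.lookup q \<beta>) * g"
  have "mdvd (lm g) \<beta>"
    using \<beta>(4) g(3) by simp
  note red_q' = reduce_term[where q = q, OF g(2,4) this, folded q'_def]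
  have "\<beta> \<in> monoms_in n"
    using \<beta>(1) q(1) gen_ideal_subset_polys_in[OF S] keys_subset_monoms_in by blast
  then have "q' \<in> ?I"
    unfolding q'_def using q(1) g(1)
    by (intro gen_ideal_diff gen_ideal_mult polys_in_single monoms_in_diff)
  have lm_q: "lm q \<in> Poly_Mapping.keys q'"
    using red_q'(2)[OF \<beta>(2)] lm_in_keys[OF q(2)] by (simp add: in_keys_iff)
  then have "q' \<noteq> 0"
    by auto
  have lm': "lm q' = lm q"
  proof (rule lm_eqI[OF lm_q])
    show "\<nu> \<le> lm q" if "\<nu> \<in> Poly_Mapping.keys q'" for \<nu>
      using red_q'(3)[OF that] \<beta>(2) le_lm by fastforce
  qed
  moreover have "lc q' = 1"
    using red_q'(2)[OF \<beta>(2)] q(3) by (simp add: lc_def lm')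
  moreover have "\<nu> < \<beta>" if "\<nu> \<in> ?R q'" for \<nu>
  proof (rule ccontr)
    assume "\<not> \<nu> < \<beta>"
    moreover have "\<nu> \<noteq> \<beta>"
      using that red_q'(1) by (auto simp: reducible_terms_def in_keys_iff)
    ultimately have "\<beta> < \<nu>" by simp
    then have "\<nu> \<in> ?R q"
      using that red_q'(2) lm' by (auto simp: reducible_terms_def in_keys_iff)
    then show False
      using \<open>\<beta> < \<nu>\<close> finite_reducible_terms by (simp add: \<beta>_def leD)
  qed
  ultimately show thesis
    using that \<open>q' \<in> ?I\<close> \<open>q' \<noteq> 0\<close> lm' by (simp add: \<beta>_def)
qed

lemma ex_reduced_with_lm:
  assumes "\<mu> \<in> lead_monoms (gen_ideal n S)"
  shows "\<exists>q. q \<in> gen_ideal n S \<and> q \<noteq> 0 \<and> lm q = \<mu> \<and> lc q = 1 \<and> reducible_terms (gen_ideal n S) q = {}"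
proof (rule ccontr)
  let ?I = "gen_ideal n S" and ?R = "reducible_terms (gen_ideal n S)"
  define T where "T = {q \<in> ?I. q \<noteq> 0 \<and> lm q = \<mu> \<and> lc q = 1}"
  assume "\<not> ?thesis"
  then have nonred: "?R q \<noteq> {}" if "q \<in> T" for q
    using that by (auto simp: T_def)
  obtain q0 where "q0 \<in> T"
    using assms ex_monic_with_lm by (force simp: T_def lead_monoms_def)
  \<comment> \<open>Pick \<open>q \<in> T\<close> whose largest reducible term is lex-minimal; reducing that term contradicts minimality.\<close>
  have "Max (?R q) \<in> monoms_in n" if "q \<in> T" for q
  proof -
    have "Max (?R q) \<in> Poly_Mapping.keys q"
      using Max_in[OF finite_reducible_terms nonred[OF that]] reducible_terms_subset by blast
    moreover have "q \<in> polys_in n"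
      using that gen_ideal_subset_polys_in[OF S] by (auto simp: T_def)
    ultimately show ?thesis
      by (rule keys_subset_monoms_in[rotated])
  qed
  then have "(\<lambda>q. Max (?R q)) ` T \<subseteq> monoms_in n"
    by blast
  then obtain q where q: "q \<in> T"
    and min: "\<And>q'. q' \<in> T \<Longrightarrow> (Max (?R q'), Max (?R q)) \<notin> less_in n"
    using wfE_min[OF wf_less_in, of _ "(\<lambda>q. Max (?R q)) ` T"] \<open>q0 \<in> T\<close>
    by (metis (no_types, lifting) image_iff)
  obtain q' where q': "q' \<in> ?I" "q' \<noteq> 0" "lm q' = \<mu>" "lc q' = 1"
    "\<And>\<nu>. \<nu> \<in> ?R q' \<Longrightarrow> \<nu> < Max (?R q)"
    using reduce_max_reducible_term[of q] q nonred[OF q] by (auto simp: T_def)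
  then have "q' \<in> T" by (simp add: T_def)
  moreover have "Max (?R q') < Max (?R q)"
    using q'(5) nonred[OF \<open>q' \<in> T\<close>] by (simp add: reducible_terms_def)
  ultimately show False
    using min \<open>(\<lambda>q. Max (?R q)) ` T \<subseteq> monoms_in n\<close> q by (auto simp: less_in_def)
qed

theorem ex_reduced_gb: "\<exists>G. is_reduced_gb n (gen_ideal n S) G"
proof -
  let ?I = "gen_ideal n S"
  define L where "L = lead_monoms ?I"
  define g where "g \<mu> = (SOME q. q \<in> ?I \<and> q \<noteq> 0 \<and> lm q = \<mu> \<and> lc q = 1 \<and> reducible_terms ?I q = {})" for \<mu>
  have L: "L \<subseteq> monoms_in n"
    unfolding L_def using S by (rule lead_monoms_subset)
  have g: "g \<mu> \<in> ?I" "g \<mu> \<noteq> 0" "lm (g \<mu>) = \<mu>" "lc (g \<mu>) = 1" "reducible_terms ?I (g \<mu>) = {}"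
    if "\<mu> \<in> mdvd_minimal L" for \<mu>
  proof -
    have "\<mu> \<in> lead_monoms ?I"
      using that by (simp add: L_def mdvd_minimal_def)
    then show "g \<mu> \<in> ?I" "g \<mu> \<noteq> 0" "lm (g \<mu>) = \<mu>" "lc (g \<mu>) = 1" "reducible_terms ?I (g \<mu>) = {}"
      unfolding g_def by (metis (mono_tags, lifting) someI_ex ex_reduced_with_lm)+
  qed
  define G where "G = g ` mdvd_minimal L"
  have "finite G"
    using finite_mdvd_minimal[OF L] by (simp add: G_def)
  moreover have "G \<subseteq> ?I" "0 \<notin> G"
    using g(1,2) by (auto simp: G_def)
  moreover have "\<exists>h\<in>G. mdvd (lm h) (lm p)" if "p \<in> ?I" "p \<noteq> 0" for p
  proof -
    have "lm p \<in> L"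
      using that by (auto simp: L_def lead_monoms_def)
    then obtain \<kappa> where "\<kappa> \<in> mdvd_minimal L" "mdvd \<kappa> (lm p)"
      using ex_mdvd_minimal_mdvd[OF L] by blast
    then show ?thesis
      using g(3) by (auto simp: G_def)
  qed
  moreover have "\<not> mdvd (lm h') \<nu>"
    if hG: "h \<in> G" "h' \<in> G - {h}" and \<nu>: "\<nu> \<in> Poly_Mapping.keys h" for h h' \<nu>
  proof -
    obtain \<mu> \<mu>' where "\<mu> \<in> mdvd_minimal L" "h = g \<mu>" "\<mu>' \<in> mdvd_minimal L" "h' = g \<mu>'" "\<mu>' \<noteq> \<mu>"
      using hG by (auto simp: G_def)
    with \<nu> g(3,5) show ?thesis
      using tail_not_mdvd_minimal_lead_monom[of h ?I h' \<nu>] by (simp add: L_def)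
  qed
  moreover have "lc h = 1" if "h \<in> G" for h
    using that g(4) by (auto simp: G_def)
  ultimately have "is_reduced_gb n ?I G"
    using gen_ideal_subset_polys_in[OF S]
    by (auto simp: is_reduced_gb_def is_groebner_basis_def)
  then show ?thesis ..
qed

end

lemma reduced_gb_tail_not_lead:
  assumes G: "is_reduced_gb n I G" and g: "g \<in> G"
    and \<mu>: "\<mu> \<in> Poly_Mapping.keys g" "\<mu> \<noteq> lm g"
  shows "\<mu> \<notin> lead_monoms I"
proof
  assume "\<mu> \<in> lead_monoms I"
  then obtain k where k: "k \<in> G" "mdvd (lm k) \<mu>"
    using G by (auto simp: lead_monoms_def is_reduced_gb_def is_groebner_basis_def)
  show False
  proof (cases "k = g")
    case True
    then have "lm g \<le> \<mu>"
      using k(2) mdvd_imp_le by blast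
    with le_lm[OF \<mu>(1)] \<mu>(2) show False by simp
  next
    case False
    with G g k \<mu>(1) show False
      by (auto simp: is_reduced_gb_def)
  qed
qed

lemma reduced_gb_subset:
  assumes G: "is_reduced_gb n I G" and H: "is_reduced_gb n I H"
    and diff: "\<And>p q. p \<in> I \<Longrightarrow> q \<in> I \<Longrightarrow> p - q \<in> I"
  shows "G \<subseteq> H"
proof
  fix g assume g: "g \<in> G"
  have gI: "g \<in> I" "g \<noteq> 0" and lc_g: "lc g = 1"
    using G g by (auto simp: is_reduced_gb_def is_groebner_basis_def)
  obtain h where h: "h \<in> H" "mdvd (lm h) (lm g)"
    using H gI by (auto simp: is_reduced_gb_def is_groebner_basis_def)
  have hI: "h \<in> I" "h \<noteq> 0" and lc_h: "lc h = 1"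
    using H h(1) by (auto simp: is_reduced_gb_def is_groebner_basis_def)
  obtain g' where g': "g' \<in> G" "mdvd (lm g') (lm h)"
    using G hI by (auto simp: is_reduced_gb_def is_groebner_basis_def)
  have "g' = g"
  proof (rule ccontr)
    assume "g' \<noteq> g"
    then have "\<not> mdvd (lm g') (lm g)"
      using G g g'(1) lm_in_keys[OF gI(2)] by (auto simp: is_reduced_gb_def)
    with g'(2) h(2) show False
      using mdvd_trans by blast
  qed
  then have lm_eq: "lm h = lm g"
    using g'(2) h(2) by (simp add: mdvd_antisym)
  have "g = h"
  proof (rule ccontr)
    assume "g \<noteq> h"
    then have d: "g - h \<in> I" "g - h \<noteq> 0"
      using diff gI(1) hI(1) by auto
    have "Poly_Mapping.lookup (g - h) (lm g) = 0"
      using lc_g lc_h lm_eq by (simp add: lc_def lookup_minus)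
    then have ne: "lm (g - h) \<noteq> lm g"
      using lm_in_keys[OF d(2)] by (auto simp: in_keys_iff)
    have lead: "lm (g - h) \<in> lead_monoms I"
      using d by (auto simp: lead_monoms_def)
    have "lm (g - h) \<in> Poly_Mapping.keys g \<or> lm (g - h) \<in> Poly_Mapping.keys h"
      using lm_in_keys[OF d(2)] keys_diff[of g h] by blast
    then show False
      using reduced_gb_tail_not_lead[OF G g _ ne] reduced_gb_tail_not_lead[OF H h(1)] ne lm_eq lead
      by auto
  qed
  with h(1) show "g \<in> H" by simp
qed

lemma reduced_gb_eqI:
  assumes "is_reduced_gb n (gen_ideal n S) G"
  shows "reduced_gb n (gen_ideal n S) = G"
  unfolding reduced_gb_def
proof (rule the_equality)
  show "G' = G" if "is_reduced_gb n (gen_ideal n S) G'" for G'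
    using reduced_gb_subset[OF that assms] reduced_gb_subset[OF assms that] gen_ideal_diff by blast
qed (fact assms)

section \<open>The substitution \<open>x\<^sub>i \<mapsto> x\<^sub>i\<^sup>m\<close>\<close>

lemma lookup_map_zero: "f 0 = 0 \<Longrightarrow> Poly_Mapping.lookup (Poly_Mapping.map f p) k = f (Poly_Mapping.lookup p k)"
  by (simp add: map.rep_eq when_def)

lemma sum_single_lookup: "(\<Sum>\<mu>\<in>Poly_Mapping.keys p. Poly_Mapping.single \<mu> (Poly_Mapping.lookup p \<mu>)) = p"
  by (rule poly_mapping_eqI) (simp add: lookup_sum lookup_single when_def in_keys_iff sum.If_cases)

definition monom_pow :: "nat \<Rightarrow> monom \<Rightarrow> monom" where
  "monom_pow m \<mu> = Poly_Mapping.map (\<lambda>k. m * k) \<mu>"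

lemma lookup_monom_pow [simp]: "Poly_Mapping.lookup (monom_pow m \<mu>) i = m * Poly_Mapping.lookup \<mu> i"
  by (simp add: monom_pow_def lookup_map_zero)

lemma monom_pow_add: "monom_pow m (\<mu> + \<nu>) = monom_pow m \<mu> + monom_pow m \<nu>"
  by (rule poly_mapping_eqI) (simp add: lookup_add distrib_left)

lemma monom_pow_inject: "m \<ge> 1 \<Longrightarrow> monom_pow m \<mu> = monom_pow m \<nu> \<longleftrightarrow> \<mu> = \<nu>"
  by (auto simp: poly_mapping_eq_iff fun_eq_iff)

lemma monom_pow_less_iff: "m \<ge> 1 \<Longrightarrow> monom_pow m \<mu> < monom_pow m \<nu> \<longleftrightarrow> \<mu> < \<nu>"
  by (simp add: less_poly_mapping.rep_eq less_fun_def)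

lemma monom_pow_le_iff: "m \<ge> 1 \<Longrightarrow> monom_pow m \<mu> \<le> monom_pow m \<nu> \<longleftrightarrow> \<mu> \<le> \<nu>"
  by (simp add: order.order_iff_strict monom_pow_less_iff monom_pow_inject)

lemma mdvd_monom_pow_iff: "m \<ge> 1 \<Longrightarrow> mdvd (monom_pow m \<mu>) (monom_pow m \<nu>) \<longleftrightarrow> mdvd \<mu> \<nu>"
  by (simp add: mdvd_def)

lemma monom_pow_in_monoms_in: "\<mu> \<in> monoms_in n \<Longrightarrow> monom_pow m \<mu> \<in> monoms_in n"
  by (auto simp: monoms_in_def in_keys_iff subset_eq)

lemma pow_subst_eq_sum:
  assumes "finite A" "Poly_Mapping.keys p \<subseteq> A"
  shows "pow_subst m p = (\<Sum>\<mu>\<in>A. Poly_Mapping.single (monom_pow m \<mu>) (Poly_Mapping.lookup p \<mu>))"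
  unfolding pow_subst_def monom_pow_def[symmetric] using assms
  by (intro sum.mono_neutral_left) (auto simp: in_keys_iff)

lemma pow_subst_add: "pow_subst m (p + q) = pow_subst m p + pow_subst m q"
proof -
  let ?A = "Poly_Mapping.keys p \<union> Poly_Mapping.keys q"
  have "Poly_Mapping.keys (p + q) \<subseteq> ?A"
    by (rule keys_add)
  then show ?thesis
    by (simp add: pow_subst_eq_sum[of ?A] lookup_add single_add sum.distrib)
qed

lemma pow_subst_zero [simp]: "pow_subst m 0 = 0"
  by (simp add: pow_subst_def)

lemma pow_subst_sum: "pow_subst m (sum f A) = (\<Sum>x\<in>A. pow_subst m (f x))"
  by (induction A rule: infinite_finite_induct) (simp_all add: pow_subst_add)

lemma pow_subst_single: "pow_subst m (Poly_Mapping.single \<mu> c) = Poly_Mapping.single (monom_pow m \<mu>) c"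
  by (simp add: pow_subst_eq_sum[of "{\<mu>}"])

lemma pow_subst_mult: "pow_subst m (p * q) = pow_subst m p * pow_subst m q"
proof -
  let ?P = "Poly_Mapping.keys p" and ?Q = "Poly_Mapping.keys q"
  have "p * q = (\<Sum>\<mu>\<in>?P. \<Sum>\<nu>\<in>?Q.
      Poly_Mapping.single (\<mu> + \<nu>) (Poly_Mapping.lookup p \<mu> * Poly_Mapping.lookup q \<nu>))"
    by (subst (1 2) sum_single_lookup[symmetric]) (simp add: sum_product mult_single)
  then have "pow_subst m (p * q) = (\<Sum>\<mu>\<in>?P. \<Sum>\<nu>\<in>?Q.
      Poly_Mapping.single (monom_pow m \<mu> + monom_pow m \<nu>) (Poly_Mapping.lookup p \<mu> * Poly_Mapping.lookup q \<nu>))"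
    by (simp add: pow_subst_sum pow_subst_single monom_pow_add)
  also have "\<dots> = pow_subst m p * pow_subst m q"
    by (simp add: pow_subst_def monom_pow_def[symmetric] sum_product mult_single)
  finally show ?thesis .
qed

lemma lookup_pow_subst:
  assumes "m \<ge> 1"
  shows "Poly_Mapping.lookup (pow_subst m p) (monom_pow m \<mu>) = Poly_Mapping.lookup p \<mu>"
  using assms
  by (simp add: pow_subst_def monom_pow_def[symmetric] lookup_sum lookup_single when_def
      monom_pow_inject in_keys_iff sum.If_cases)

lemma keys_pow_subst:
  assumes "m \<ge> 1"
  shows "Poly_Mapping.keys (pow_subst m p) = monom_pow m ` Poly_Mapping.keys p"
proof
  show "Poly_Mapping.keys (pow_subst m p) \<subseteq> monom_pow m ` Poly_Mapping.keys p"
    unfolding pow_subst_def monom_pow_def[symmetric]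
    using keys_sum[of _ "Poly_Mapping.keys p"] by (fastforce split: if_splits)
  show "monom_pow m ` Poly_Mapping.keys p \<subseteq> Poly_Mapping.keys (pow_subst m p)"
    using lookup_pow_subst[OF assms] by (auto simp: in_keys_iff)
qed

lemma pow_subst_nonzero: "m \<ge> 1 \<Longrightarrow> p \<noteq> 0 \<Longrightarrow> pow_subst m p \<noteq> 0"
  by (metis keys_pow_subst image_is_empty keys_eq_empty)

lemma lm_pow_subst:
  assumes "m \<ge> 1" "p \<noteq> 0"
  shows "lm (pow_subst m p) = monom_pow m (lm p)"
proof (rule lm_eqI)
  show "monom_pow m (lm p) \<in> Poly_Mapping.keys (pow_subst m p)"
    using assms by (simp add: keys_pow_subst lm_in_keys)
  show "\<nu> \<le> monom_pow m (lm p)" if "\<nu> \<in> Poly_Mapping.keys (pow_subst m p)" for \<nu>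
    using that assms(1) le_lm by (auto simp: keys_pow_subst monom_pow_le_iff)
qed

lemma lc_pow_subst: "m \<ge> 1 \<Longrightarrow> p \<noteq> 0 \<Longrightarrow> lc (pow_subst m p) = lc p"
  by (simp add: lc_def lm_pow_subst lookup_pow_subst)

lemma pow_subst_polys_in: "p \<in> polys_in n \<Longrightarrow> pow_subst m p \<in> polys_in n"
  unfolding pow_subst_def monom_pow_def[symmetric]
  by (auto intro!: polys_in_sum polys_in_single monom_pow_in_monoms_in keys_subset_monoms_in)

lemma pow_subst_gen_ideal:
  assumes "p \<in> gen_ideal n S"
  shows "pow_subst m p \<in> gen_ideal n (pow_subst m ` S)"
proof -
  obtain F c where F: "finite F" "F \<subseteq> S" "\<And>s. s \<in> F \<Longrightarrow> c s \<in> polys_in n" "p = (\<Sum>s\<in>F. c s * s)"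
    using assms by (rule gen_idealE) auto
  then have "pow_subst m p = (\<Sum>s\<in>F. pow_subst m (c s) * pow_subst m s)"
    by (simp add: pow_subst_sum pow_subst_mult)
  also have "\<dots> \<in> gen_ideal n (pow_subst m ` S)"
    using F(1-3)
    by (intro gen_ideal_sum gen_ideal_mult generator_in_gen_ideal pow_subst_polys_in) auto
  finally show ?thesis .
qed

section \<open>Residue parts\<close>

lemma inj_shift_monom_pow: "m \<ge> 1 \<Longrightarrow> inj (\<lambda>\<mu>. r + monom_pow m \<mu>)"
  by (auto intro!: injI simp: monom_pow_inject)

lemma ex_shift_monom_pow_iff:
  assumes "m \<ge> 1" "\<And>i. Poly_Mapping.lookup r i < m"
  shows "(\<exists>\<gamma>. \<alpha> = r + monom_pow m \<gamma>) \<longleftrightarrow> (\<forall>i. Poly_Mapping.lookup \<alpha> i mod m = Poly_Mapping.lookup r i)"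
proof
  assume "\<exists>\<gamma>. \<alpha> = r + monom_pow m \<gamma>"
  then show "\<forall>i. Poly_Mapping.lookup \<alpha> i mod m = Poly_Mapping.lookup r i"
    using assms(2) by (auto simp: lookup_add)
next
  assume "\<forall>i. Poly_Mapping.lookup \<alpha> i mod m = Poly_Mapping.lookup r i"
  then have "\<alpha> = r + monom_pow m (Poly_Mapping.map (\<lambda>k. k div m) \<alpha>)"
    by (intro poly_mapping_eqI) (metis lookup_add lookup_map_zero lookup_monom_pow div_0 mod_mult_div_eq)
  then show "\<exists>\<gamma>. \<alpha> = r + monom_pow m \<gamma>" ..
qed

text \<open>The terms of \<open>p\<close> with exponents in \<open>r + m\<nat>\<^sup>n\<close>, with those exponents divided by \<open>m\<close>.\<close>
definition residue_part :: "nat \<Rightarrow> monom \<Rightarrow> qpoly \<Rightarrow> qpoly" where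
  "residue_part m r p = Poly_Mapping.map_key (\<lambda>\<mu>. r + monom_pow m \<mu>) p"

context
  fixes m :: nat and r :: monom
  assumes m: "m \<ge> 1"
begin

lemma lookup_residue_part:
  "Poly_Mapping.lookup (residue_part m r p) \<mu> = Poly_Mapping.lookup p (r + monom_pow m \<mu>)"
  by (simp add: residue_part_def map_key.rep_eq[OF inj_shift_monom_pow[OF m]])

lemma residue_part_add: "residue_part m r (p + q) = residue_part m r p + residue_part m r q"
  by (simp add: residue_part_def map_key_plus[OF inj_shift_monom_pow[OF m]])

lemma residue_part_zero [simp]: "residue_part m r 0 = 0"
  by (simp add: residue_part_def map_key_zero[OF inj_shift_monom_pow[OF m]])

lemma residue_part_sum: "residue_part m r (sum f A) = (\<Sum>x\<in>A. residue_part m r (f x))"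
  by (induction A rule: infinite_finite_induct) (simp_all add: residue_part_add)

lemma residue_part_single_shift:
  "residue_part m r (Poly_Mapping.single (r + monom_pow m \<gamma>) c) = Poly_Mapping.single \<gamma> c"
  by (rule poly_mapping_eqI) (simp add: lookup_residue_part lookup_single when_def monom_pow_inject[OF m])

lemma residue_part_single_other:
  "(\<And>\<gamma>. \<alpha> \<noteq> r + monom_pow m \<gamma>) \<Longrightarrow> residue_part m r (Poly_Mapping.single \<alpha> c) = 0"
  by (rule poly_mapping_eqI) (auto simp: lookup_residue_part lookup_single when_def)

lemma residue_part_polys_in: "p \<in> polys_in n \<Longrightarrow> residue_part m r p \<in> polys_in n"
proof (unfold polys_in_iff_keys, rule subsetI)
  fix \<mu> assume p: "Poly_Mapping.keys p \<subseteq> monoms_in n" and "\<mu> \<in> Poly_Mapping.keys (residue_part m r p)"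
  then have "r + monom_pow m \<mu> \<in> monoms_in n"
    by (auto simp: in_keys_iff lookup_residue_part)
  moreover have "Poly_Mapping.keys \<mu> \<subseteq> Poly_Mapping.keys (r + monom_pow m \<mu>)"
    using m by (auto simp: in_keys_iff lookup_add)
  ultimately show "\<mu> \<in> monoms_in n"
    by (auto simp: monoms_in_def)
qed

context
  assumes r: "\<And>i. Poly_Mapping.lookup r i < m"
begin

lemma residue_part_single_mult_pow_subst:
  "residue_part m r (Poly_Mapping.single \<alpha> a * pow_subst m (Poly_Mapping.single \<beta> b))
     = residue_part m r (Poly_Mapping.single \<alpha> a) * Poly_Mapping.single \<beta> b"
proof (cases "\<exists>\<gamma>. \<alpha> = r + monom_pow m \<gamma>")
  case True
  then obtain \<gamma> where "\<alpha> = r + monom_pow m \<gamma>" ..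
  then show ?thesis
    by (simp add: pow_subst_single mult_single residue_part_single_shift add.assoc
        flip: monom_pow_add)
next
  case False
  \<comment> \<open>Multiplying by \<open>x\<^sup>m\<^sup>\<beta>\<close> does not change exponents modulo \<open>m\<close>.\<close>
  then have "\<nexists>\<gamma>. \<alpha> + monom_pow m \<beta> = r + monom_pow m \<gamma>"
    by (simp add: ex_shift_monom_pow_iff[OF m r] lookup_add)
  with False show ?thesis
    by (simp add: pow_subst_single mult_single residue_part_single_other)
qed

lemma residue_part_mult_pow_subst:
  "residue_part m r (c * pow_subst m s) = residue_part m r c * s"
proof -
  let ?C = "Poly_Mapping.keys c" and ?S = "Poly_Mapping.keys s"
  let ?c = "\<lambda>\<alpha>. Poly_Mapping.single \<alpha> (Poly_Mapping.lookup c \<alpha>)"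
    and ?s = "\<lambda>\<beta>. Poly_Mapping.single \<beta> (Poly_Mapping.lookup s \<beta>)"
  have "c * pow_subst m s = (\<Sum>\<alpha>\<in>?C. \<Sum>\<beta>\<in>?S. ?c \<alpha> * pow_subst m (?s \<beta>))"
    by (subst (1 2) sum_single_lookup[symmetric]) (simp add: pow_subst_sum sum_product)
  then have "residue_part m r (c * pow_subst m s) = (\<Sum>\<alpha>\<in>?C. \<Sum>\<beta>\<in>?S. residue_part m r (?c \<alpha>) * ?s \<beta>)"
    by (simp add: residue_part_sum residue_part_single_mult_pow_subst)
  also have "\<dots> = residue_part m r c * s"
    by (subst (3 4) sum_single_lookup[symmetric]) (simp add: residue_part_sum sum_product)
  finally show ?thesis .
qed

lemma residue_part_gen_ideal:
  assumes "p \<in> gen_ideal n (pow_subst m ` S)"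
  shows "residue_part m r p \<in> gen_ideal n S"
proof -
  obtain F c where F: "finite F" "F \<subseteq> pow_subst m ` S" "\<And>t. t \<in> F \<Longrightarrow> c t \<in> polys_in n"
      "p = (\<Sum>t\<in>F. c t * t)"
    using assms by (rule gen_idealE) auto
  have "\<forall>t\<in>F. \<exists>s\<in>S. t = pow_subst m s"
    using F(2) by blast
  then obtain s where s: "\<And>t. t \<in> F \<Longrightarrow> s t \<in> S \<and> t = pow_subst m (s t)"
    by (metis bchoice)
  have "residue_part m r p = (\<Sum>t\<in>F. residue_part m r (c t * pow_subst m (s t)))"
    using s by (simp add: F(4) residue_part_sum)
  also have "\<dots> = (\<Sum>t\<in>F. residue_part m r (c t) * s t)"
    by (simp add: residue_part_mult_pow_subst)
  also have "\<dots> \<in> gen_ideal n S"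
    using F(1,3) s
    by (intro gen_ideal_sum gen_ideal_mult generator_in_gen_ideal residue_part_polys_in) auto
  finally show ?thesis .
qed

end

end

section \<open>Reduced Groebner bases of \<open>\<langle>S\<^sup>m\<rangle>\<close>\<close>

lemma lm_residue_part:
  assumes m: "m \<ge> 1" and p: "p \<noteq> 0" and lm_p: "lm p = r + monom_pow m \<mu>"
  shows "residue_part m r p \<noteq> 0" and "lm (residue_part m r p) = \<mu>"
proof -
  have \<mu>: "\<mu> \<in> Poly_Mapping.keys (residue_part m r p)"
    using lm_in_keys[OF p] by (simp add: in_keys_iff lookup_residue_part[OF m] flip: lm_p)
  then show "residue_part m r p \<noteq> 0"
    by auto
  show "lm (residue_part m r p) = \<mu>"
  proof (rule lm_eqI[OF \<mu>])
    fix \<nu> assume "\<nu> \<in> Poly_Mapping.keys (residue_part m r p)"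
    then have "r + monom_pow m \<nu> \<le> r + monom_pow m \<mu>"
      using le_lm by (simp add: in_keys_iff lookup_residue_part[OF m] flip: lm_p)
    then show "\<nu> \<le> \<mu>"
      by (simp add: monom_pow_le_iff[OF m])
  qed
qed

lemma lead_monom_pow_subst_gen_ideal:
  assumes m: "m \<ge> 1" and p: "p \<in> gen_ideal n (pow_subst m ` S)" "p \<noteq> 0"
  obtains q where "q \<in> gen_ideal n S" "q \<noteq> 0" "mdvd (monom_pow m (lm q)) (lm p)"
proof -
  define r where "r = Poly_Mapping.map (\<lambda>k. k mod m) (lm p)"
  define \<mu> where "\<mu> = Poly_Mapping.map (\<lambda>k. k div m) (lm p)"
  have r: "Poly_Mapping.lookup r i < m" for i
    using m by (simp add: r_def lookup_map_zero)
  have lm_p: "lm p = r + monom_pow m \<mu>"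
    by (rule poly_mapping_eqI) (simp add: r_def \<mu>_def lookup_add lookup_map_zero)
  show thesis
  proof (rule that)
    show "residue_part m r p \<in> gen_ideal n S"
      using residue_part_gen_ideal[OF m r p(1)] .
    show "residue_part m r p \<noteq> 0"
      using lm_residue_part(1)[OF m p(2) lm_p] .
    show "mdvd (monom_pow m (lm (residue_part m r p))) (lm p)"
      by (simp add: lm_residue_part(2)[OF m p(2) lm_p] lm_p mdvd_def lookup_add)
  qed
qed

theorem is_reduced_gb_pow_subst:
  assumes m: "m \<ge> 1" and G: "is_reduced_gb n (gen_ideal n S) G"
  shows "is_reduced_gb n (gen_ideal n (pow_subst m ` S)) (pow_subst m ` G)"
proof -
  have G_gb: "finite G" "G \<subseteq> gen_ideal n S" "G \<subseteq> polys_in n" "0 \<notin> G"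
    "\<And>p. p \<in> gen_ideal n S \<Longrightarrow> p \<noteq> 0 \<Longrightarrow> \<exists>g\<in>G. mdvd (lm g) (lm p)"
    and G_red: "\<And>g. g \<in> G \<Longrightarrow> lc g = 1"
    "\<And>g g' \<mu>. g \<in> G \<Longrightarrow> \<mu> \<in> Poly_Mapping.keys g \<Longrightarrow> g' \<in> G - {g} \<Longrightarrow> \<not> mdvd (lm g') \<mu>"
    using G unfolding is_reduced_gb_def is_groebner_basis_def by auto
  have G_nz: "g \<noteq> 0" if "g \<in> G" for g
    using G_gb(4) that by blast
  have gb: "\<exists>g\<in>G. mdvd (lm (pow_subst m g)) (lm p)"
    if p: "p \<in> gen_ideal n (pow_subst m ` S)" "p \<noteq> 0" for p
  proof -
    obtain q where q: "q \<in> gen_ideal n S" "q \<noteq> 0" "mdvd (monom_pow m (lm q)) (lm p)"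
      using lead_monom_pow_subst_gen_ideal[OF m p] .
    then obtain g where g: "g \<in> G" "mdvd (lm g) (lm q)"
      using G_gb(5) by blast
    then have "mdvd (lm (pow_subst m g)) (monom_pow m (lm q))"
      by (simp add: lm_pow_subst[OF m G_nz] mdvd_monom_pow_iff[OF m])
    with q(3) g(1) show ?thesis
      using mdvd_trans by blast
  qed
  have red: "\<not> mdvd (lm h') \<nu>"
    if h: "h \<in> pow_subst m ` G" "h' \<in> pow_subst m ` G - {h}" and \<nu>: "\<nu> \<in> Poly_Mapping.keys h"
    for h h' \<nu>
  proof -
    obtain g g' where g: "g \<in> G" "h = pow_subst m g" "g' \<in> G - {g}" "h' = pow_subst m g'"
      using h by blast
    obtain \<mu> where "\<mu> \<in> Poly_Mapping.keys g" "\<nu> = monom_pow m \<mu>"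
      using \<nu> g(2) keys_pow_subst[OF m] by blast
    then show ?thesis
      using G_red(2)[OF g(1) _ g(3)] g(3,4) G_nz
      by (simp add: lm_pow_subst[OF m] mdvd_monom_pow_iff[OF m])
  qed
  have "finite (pow_subst m ` G)" "0 \<notin> pow_subst m ` G"
    using G_gb(1) G_nz pow_subst_nonzero[OF m] by auto
  moreover have "pow_subst m ` G \<subseteq> gen_ideal n (pow_subst m ` S)" "pow_subst m ` G \<subseteq> polys_in n"
    using G_gb(2,3) pow_subst_gen_ideal pow_subst_polys_in by blast+
  moreover have "lc h = 1" if "h \<in> pow_subst m ` G" for h
    using that G_red(1) G_nz lc_pow_subst[OF m] by auto
  ultimately show ?thesis
    unfolding is_reduced_gb_def is_groebner_basis_def
    by (intro conjI ballI impI) (simp_all add: gb red)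
qed

theorem mainTheorem4:
  fixes n m :: nat and S :: "qpoly set"
  assumes "S \<subseteq> polys_in n" and "m \<ge> 1"
  shows "reduced_gb n (gen_ideal n (pow_subst m ` S))
           = pow_subst m ` reduced_gb n (gen_ideal n S)"
proof -
  obtain G where G: "is_reduced_gb n (gen_ideal n S) G"
    using ex_reduced_gb[OF assms(1)] ..
  show ?thesis
    using reduced_gb_eqI[OF G] reduced_gb_eqI[OF is_reduced_gb_pow_subst[OF assms(2) G]] by simp
qed

end
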